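(* Let $(A,\alpha_A)$ be a Hom-algebra and $(H,\alpha_H)$ a Hom-coalgebra (finite-dimensional, with bijective structure maps). Let $\varphi:{A^*}^{cop}\otimes H\to H\otimes{A^*}^{cop}$, $\varphi(f\otimes h)=\sum h^\varphi\otimes f^\varphi$, and $\Phi:H\otimes A\to A\otimes H$, $\Phi(h\otimes a)=\sum a_\Phi\otimes h^\Phi$, be linear maps corresponding to each other via $\sum f(a_\Phi)h^\Phi=\sum f^\varphi(a)h^\varphi$ for all $f\in A^*$, $a\in A$, $h\in H$ (this is a bijection between such linear maps). Then $\varphi$ is a Hom-cotwistor if and only if $(\alpha_A\otimes\alpha_H)\circ\Phi=\Phi\circ(\alpha_H\otimes\alpha_A)$ and, for all $a,b\in A$, $h\in H$: (E1) $(m_A\otimes\alpha_H)\big((\mathrm{id}_A\otimes\Phi)(\Phi\otimes\mathrm{id}_A)(h\otimes a\otimes b)\big)=\Phi(\alpha_H(h)\otimes ab)$, i.e. $\sum a_\Phi b_\Psi\otimes\alpha_H((h^\Phi)^\Psi)=\sum(ab)_\Phi\otimes\alpha_H(h)^\Phi$; (E2) $(\Phi\otimes\mathrm{id}_H)(\mathrm{id}_H\otimes\Phi)(\Delta_H(h)\otimes\alpha_A(a))=(\alpha_A\otimes\Delta_H)(\Phi(h\otimes a))$; (E3) $(\mathrm{id}_A\otimes\varepsilon_H)(\Phi(h\otimes a))=\varepsilon_H(h)a$; (E4) $\Phi(h\otimes1_A)=1_A\otimes h$.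
   Context: $\Bbbk$ field of characteristic $0$; vector spaces finite-dimensional. Hom-algebra $(A,\mu,1_A,\alpha_A)$: $\alpha_A(a)(bc)=(ab)\alpha_A(c)$, $\alpha_A(1_A)=1_A$, $1_Aa=a1_A=\alpha_A(a)$; $m_A$ denotes multiplication. Hom-coalgebra $(C,\alpha,\Delta,\varepsilon)$: $\varepsilon\alpha=\varepsilon$, $\alpha(c_1)\otimes\Delta(c_2)=\Delta(c_1)\otimes\alpha(c_2)$, $\varepsilon(c_1)c_2=c_1\varepsilon(c_2)=\alpha(c)$. ${A^*}^{cop}$ is the Hom-coalgebra on $A^*$ with $\overline\varepsilon(f)=f(1_A)$, $\overline\Delta(f)\in A^*\otimes A^*\cong(A\otimes A)^*$ given by $\overline\Delta(f)(x\otimes y)=f(\alpha_A^{-2}(yx))$, and $\alpha_{{A^*}^{cop}}(f)=f\circ\alpha_A^{-1}$. For Hom-coalgebras $B,H$, a Hom-cotwistor is a linear $\varphi:B\otimes H\to H\otimes B$ with $\varphi\circ(\alpha_B\otimes\alpha_H)=(\alpha_H\otimes\alpha_B)\circ\varphi$ and (M1) $((\varphi\otimes\mathrm{id}_B)(\mathrm{id}_B\otimes\varphi))(\Delta_B(b)\otimes\alpha_H(h))=(\alpha_H\otimes\Delta_B)\varphi(b\otimes h)$; (M2) $((\mathrm{id}_H\otimes\varphi)(\varphi\otimes\mathrm{id}_H))(\alpha_B(b)\otimes\Delta_H(h))=(\Delta_H\otimes\alpha_B)\varphi(b\otimes h)$; (M3) $(\varepsilon_H\otimes\mathrm{id})\varphi(b\otimes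 h)=\varepsilon_H(h)b$; (M4) $(\mathrm{id}\otimes\varepsilon_B)\varphi(b\otimes h)=\varepsilon_B(b)h$ (here $B={A^*}^{cop}$). *)

theory Defs
  imports Main
begin

text \<open>Finite-dimensional vector spaces over a field 'k are modelled in coordinates:
  a space with basis indexed by a finite type 'a is the coordinate space 'a => 'k.
  The tensor product of the spaces indexed by 'a and 'b is the space indexed by 'a * 'b,
  with pure tensors given by tens.\<close>

definition ev :: "'a \<Rightarrow> 'a \<Rightarrow> 'k::field" where
  "ev a = (\<lambda>b. if b = a then 1 else 0)"

definition tens :: "('a \<Rightarrow> 'k::field) \<Rightarrow> ('b \<Rightarrow> 'k) \<Rightarrow> ('a \<times> 'b \<Rightarrow> 'k)" where
  "tens x y = (\<lambda>(a, b). x a * y b)"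

text \<open>Evaluation f(x) of a functional f in A* (coordinates w.r.t. the dual basis) at x in A.\<close>
definition pair :: "('a::finite \<Rightarrow> 'k::field) \<Rightarrow> ('a \<Rightarrow> 'k) \<Rightarrow> 'k" where
  "pair f x = (\<Sum>a\<in>UNIV. f a * x a)"

definition lin :: "(('a \<Rightarrow> 'k::field) \<Rightarrow> ('b \<Rightarrow> 'k)) \<Rightarrow> bool" where
  "lin f \<longleftrightarrow> (\<forall>x y c. f (\<lambda>a. c * x a + y a) = (\<lambda>b. c * f x b + f y b))"

definition lin1 :: "(('a \<Rightarrow> 'k::field) \<Rightarrow> 'k) \<Rightarrow> bool" where
  "lin1 f \<longleftrightarrow> (\<forall>x y c. f (\<lambda>a. c * x a + y a) = c * f x + f y)"

definition bilin :: "(('a \<Rightarrow> 'k::field) \<Rightarrow> ('b \<Rightarrow> 'k) \<Rightarrow> ('c \<Rightarrow> 'k)) \<Rightarrow> bool" where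
  "bilin m \<longleftrightarrow> (\<forall>x. lin (m x)) \<and> (\<forall>y. lin (\<lambda>x. m x y))"

definition tmap :: "(('a \<Rightarrow> 'k::field) \<Rightarrow> ('c \<Rightarrow> 'k)) \<Rightarrow> (('b \<Rightarrow> 'k) \<Rightarrow> ('d \<Rightarrow> 'k))
    \<Rightarrow> ('a::finite \<times> 'b::finite \<Rightarrow> 'k) \<Rightarrow> ('c \<times> 'd \<Rightarrow> 'k)" where
  "tmap f g w = (\<lambda>(c, d). \<Sum>p\<in>UNIV. w p * f (ev (fst p)) c * g (ev (snd p)) d)"

definition assocL :: "('a \<times> ('b \<times> 'c) \<Rightarrow> 'k) \<Rightarrow> (('a \<times> 'b) \<times> 'c \<Rightarrow> 'k)" where
  "assocL w = (\<lambda>((a, b), c). w (a, (b, c)))"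

definition assocR :: "(('a \<times> 'b) \<times> 'c \<Rightarrow> 'k) \<Rightarrow> ('a \<times> ('b \<times> 'c) \<Rightarrow> 'k)" where
  "assocR w = (\<lambda>(a, (b, c)). w ((a, b), c))"

text \<open>(e (x) id) and (id (x) e) for a linear functional e, followed by k (x) V = V = V (x) k.\<close>
definition contrL :: "(('a::finite \<Rightarrow> 'k::field) \<Rightarrow> 'k) \<Rightarrow> ('a \<times> 'b \<Rightarrow> 'k) \<Rightarrow> ('b \<Rightarrow> 'k)" where
  "contrL e w = (\<lambda>b. \<Sum>a\<in>UNIV. w (a, b) * e (ev a))"

definition contrR :: "(('b::finite \<Rightarrow> 'k::field) \<Rightarrow> 'k) \<Rightarrow> ('a \<times> 'b \<Rightarrow> 'k) \<Rightarrow> ('a \<Rightarrow> 'k)" where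
  "contrR e w = (\<lambda>a. \<Sum>b\<in>UNIV. w (a, b) * e (ev b))"

definition mlin :: "(('a::finite \<Rightarrow> 'k::field) \<Rightarrow> ('a \<Rightarrow> 'k) \<Rightarrow> ('a \<Rightarrow> 'k))
    \<Rightarrow> ('a \<times> 'a \<Rightarrow> 'k) \<Rightarrow> ('a \<Rightarrow> 'k)" where
  "mlin m w = (\<lambda>c. \<Sum>p\<in>UNIV. w p * m (ev (fst p)) (ev (snd p)) c)"

definition hom_algebra :: "(('a::finite \<Rightarrow> 'k::field) \<Rightarrow> ('a \<Rightarrow> 'k) \<Rightarrow> ('a \<Rightarrow> 'k))
    \<Rightarrow> ('a \<Rightarrow> 'k) \<Rightarrow> (('a \<Rightarrow> 'k) \<Rightarrow> ('a \<Rightarrow> 'k)) \<Rightarrow> bool" where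
  "hom_algebra m one alpha \<longleftrightarrow>
     bilin m \<and> lin alpha \<and> bij alpha \<and>
     (\<forall>a b c. m (alpha a) (m b c) = m (m a b) (alpha c)) \<and>
     alpha one = one \<and>
     (\<forall>a. m one a = alpha a \<and> m a one = alpha a)"

definition hom_coalgebra :: "(('c::finite \<Rightarrow> 'k::field) \<Rightarrow> ('c \<Rightarrow> 'k))
    \<Rightarrow> (('c \<Rightarrow> 'k) \<Rightarrow> ('c \<times> 'c \<Rightarrow> 'k)) \<Rightarrow> (('c \<Rightarrow> 'k) \<Rightarrow> 'k) \<Rightarrow> bool" where
  "hom_coalgebra alpha delta eps \<longleftrightarrow>
     lin alpha \<and> bij alpha \<and> lin delta \<and> lin1 eps \<and>
     (\<forall>c. eps (alpha c) = eps c) \<and>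
     (\<forall>c. tmap alpha delta (delta c) = assocR (tmap delta alpha (delta c))) \<and>
     (\<forall>c. contrL eps (delta c) = alpha c \<and> contrR eps (delta c) = alpha c)"

text \<open>The Hom-coalgebra (A*)^cop, elements of A* in dual-basis coordinates;
  A* (x) A* = (A (x) A)* in the induced coordinates.\<close>
definition dual_eps :: "('a::finite \<Rightarrow> 'k::field) \<Rightarrow> ('a \<Rightarrow> 'k) \<Rightarrow> 'k" where
  "dual_eps one f = pair f one"

definition dual_delta :: "(('a::finite \<Rightarrow> 'k::field) \<Rightarrow> ('a \<Rightarrow> 'k) \<Rightarrow> ('a \<Rightarrow> 'k))
    \<Rightarrow> (('a \<Rightarrow> 'k) \<Rightarrow> ('a \<Rightarrow> 'k)) \<Rightarrow> ('a \<Rightarrow> 'k) \<Rightarrow> ('a \<times> 'a \<Rightarrow> 'k)" where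
  "dual_delta m alpha f = (\<lambda>(x, y). pair f (inv alpha (inv alpha (m (ev y) (ev x)))))"

definition dual_alpha :: "(('a::finite \<Rightarrow> 'k::field) \<Rightarrow> ('a \<Rightarrow> 'k)) \<Rightarrow> ('a \<Rightarrow> 'k) \<Rightarrow> ('a \<Rightarrow> 'k)" where
  "dual_alpha alpha f = (\<lambda>i. pair f (inv alpha (ev i)))"

definition hom_cotwistor :: "(('b::finite \<Rightarrow> 'k::field) \<Rightarrow> ('b \<Rightarrow> 'k))
    \<Rightarrow> (('b \<Rightarrow> 'k) \<Rightarrow> ('b \<times> 'b \<Rightarrow> 'k)) \<Rightarrow> (('b \<Rightarrow> 'k) \<Rightarrow> 'k)
    \<Rightarrow> (('h::finite \<Rightarrow> 'k) \<Rightarrow> ('h \<Rightarrow> 'k))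
    \<Rightarrow> (('h \<Rightarrow> 'k) \<Rightarrow> ('h \<times> 'h \<Rightarrow> 'k)) \<Rightarrow> (('h \<Rightarrow> 'k) \<Rightarrow> 'k)
    \<Rightarrow> (('b \<times> 'h \<Rightarrow> 'k) \<Rightarrow> ('h \<times> 'b \<Rightarrow> 'k)) \<Rightarrow> bool" where
  "hom_cotwistor aB dB eB aH dH eH phi \<longleftrightarrow>
     lin phi \<and>
     (\<forall>w. phi (tmap aB aH w) = tmap aH aB (phi w)) \<and>
     (\<forall>b h. assocR (tmap phi id (assocL (tmap id phi (assocR (tens (dB b) (aH h))))))
              = tmap aH dB (phi (tens b h))) \<and>
     (\<forall>b h. assocL (tmap id phi (assocR (tmap phi id (assocL (tens (aB b) (dH h))))))
              = tmap dH aB (phi (tens b h))) \<and>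
     (\<forall>b h. contrL eH (phi (tens b h)) = (\<lambda>i. eH h * b i)) \<and>
     (\<forall>b h. contrR eB (phi (tens b h)) = (\<lambda>j. eB b * h j))"

end

theory Submission
  imports Defs
begin

text \<open>In coordinates the correspondence says that \<open>\<phi>\<close> and \<open>\<Phi>\<close> are given by one array of
  scalars: the \<open>(j, i)\<close> entry of \<open>\<phi>(e\<^sub>p \<otimes> e\<^sub>q)\<close> is the \<open>(p, j)\<close> entry of \<open>\<Phi>(e\<^sub>q \<otimes> e\<^sub>i)\<close>.
  The structure maps of \<open>(A\<^sup>*)\<^sup>c\<^sup>o\<^sup>p\<close> are transposes as well: \<open>\<alpha>\<close> of \<open>\<alpha>\<^sub>A\<^sup>-\<^sup>1\<close>, \<open>\<Delta>\<close> of the opposite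
  multiplication followed by \<open>\<alpha>\<^sub>A\<^sup>-\<^sup>2\<close>, and \<open>\<epsilon>\<close> of the unit.  Expanding a cotwistor axiom on basis
  tensors therefore gives, entry by entry, the corresponding condition on \<open>\<Phi>\<close>, except that the
  invertible twisting maps \<open>\<alpha>\<^sub>A\<^sup>-\<^sup>1\<close>, \<open>\<alpha>\<^sub>A\<^sup>-\<^sup>2\<close> and \<open>\<alpha>\<^sub>H\<close> sit on different tensor factors.  They are
  moved into place by applying invertible maps to both sides; for (M1) this needs the compatibility
  of \<open>\<Phi>\<close> with \<open>\<alpha>\<^sub>A \<otimes> \<alpha>\<^sub>H\<close>, which is itself the transpose of the compatibility of \<open>\<phi>\<close> with the
  structure maps.\<close>

subsection \<open>Linear algebra in coordinates\<close>

lemma ev_mult: "ev a b * (x::'k::field) = (if b = a then x else 0)" "x * ev a b = (if b = a then x else 0)"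
  by (simp_all add: ev_def)

lemma ev_pair: "ev (a, b) (c, d) = (ev a c * ev b d :: 'k::field)"
  by (simp add: ev_def)

lemma sum_ev [simp]:
  fixes x :: "'a::finite \<Rightarrow> 'k::field"
  shows "(\<Sum>s\<in>UNIV. x s * ev s a) = x a" "(\<Sum>s\<in>UNIV. ev s a * x s) = x a"
    "(\<Sum>s\<in>UNIV. x s * ev a s) = x a" "(\<Sum>s\<in>UNIV. ev a s * x s) = x a"
  by (simp_all add: ev_mult)

lemma sum_ev_mult_right [simp]: "(\<Sum>s\<in>(UNIV::'a::finite set). x s * ev s a * y) = (x a * y :: 'k::field)"
  by (simp add: sum_distrib_right[symmetric])

lemma if_zero_mult:
  "(if P then x else 0) * (y::'k::field) = (if P then x * y else 0)"
  "y * (if P then x else 0) = (if P then y * x else 0)"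
  by auto

lemma sum_if_zero: "(\<Sum>s\<in>A. if P then f s else 0) = (if P then \<Sum>s\<in>A. f s else 0)"
  by auto

lemmas ev_collapse = ev_pair ev_mult if_zero_mult sum_if_zero sum.delta sum.delta'

lemma sum_UNIV_prod:
  "(\<Sum>p\<in>(UNIV::('a::finite \<times> 'b::finite) set). g p) = (\<Sum>a\<in>UNIV. \<Sum>b\<in>UNIV. g (a, b))"
  by (simp add: UNIV_Times_UNIV[symmetric] sum.cartesian_product del: UNIV_Times_UNIV)

lemma sum_rotate3:
  "(\<Sum>a\<in>A. \<Sum>b\<in>B. \<Sum>c\<in>C. F a b c) = (\<Sum>c\<in>C. \<Sum>a\<in>A. \<Sum>b\<in>B. F a b c)"
proof -
  have "(\<Sum>a\<in>A. \<Sum>b\<in>B. \<Sum>c\<in>C. F a b c) = (\<Sum>a\<in>A. \<Sum>c\<in>C. \<Sum>b\<in>B. F a b c)"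
    by (rule sum.cong[OF refl], rule sum.swap)
  also have "\<dots> = (\<Sum>c\<in>C. \<Sum>a\<in>A. \<Sum>b\<in>B. F a b c)"
    by (rule sum.swap)
  finally show ?thesis .
qed

lemma sum_swap_pairs:
  "(\<Sum>a\<in>A. \<Sum>b\<in>B. \<Sum>c\<in>C. \<Sum>d\<in>D. F a b c d) = (\<Sum>c\<in>C. \<Sum>d\<in>D. \<Sum>a\<in>A. \<Sum>b\<in>B. F a b c d)"
proof -
  have "(\<Sum>a\<in>A. \<Sum>b\<in>B. \<Sum>c\<in>C. \<Sum>d\<in>D. F a b c d) = (\<Sum>a\<in>A. \<Sum>c\<in>C. \<Sum>b\<in>B. \<Sum>d\<in>D. F a b c d)"
    by (rule sum.cong[OF refl], rule sum.swap)
  also have "\<dots> = (\<Sum>a\<in>A. \<Sum>c\<in>C. \<Sum>d\<in>D. \<Sum>b\<in>B. F a b c d)"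
    by (rule sum.cong[OF refl], rule sum.cong[OF refl], rule sum.swap)
  also have "\<dots> = (\<Sum>c\<in>C. \<Sum>a\<in>A. \<Sum>d\<in>D. \<Sum>b\<in>B. F a b c d)"
    by (rule sum.swap)
  also have "\<dots> = (\<Sum>c\<in>C. \<Sum>d\<in>D. \<Sum>a\<in>A. \<Sum>b\<in>B. F a b c d)"
    by (rule sum.cong[OF refl], rule sum.swap)
  finally show ?thesis .
qed

lemma linD: "lin f \<Longrightarrow> f (\<lambda>a. c * x a + y a) = (\<lambda>b. c * f x b + f y b)"
  unfolding lin_def by blast

lemma lin_zero: assumes "lin f" shows "f (\<lambda>_. 0) = (\<lambda>_. 0)"
proof -
  have "f (\<lambda>_. 0) = (\<lambda>b. f (\<lambda>_. 0) b + f (\<lambda>_. 0) b)"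
    using linD[OF assms, of 1 "\<lambda>_. 0" "\<lambda>_. 0"] by simp
  then show ?thesis
    by (metis add_cancel_right_right)
qed

lemma lin_sum:
  assumes "lin f" and "finite S"
  shows "f (\<lambda>a. \<Sum>s\<in>S. c s * x s a) = (\<lambda>b. \<Sum>s\<in>S. c s * f (x s) b)"
  using assms(2)
proof (induction S rule: finite_induct)
  case empty
  then show ?case using lin_zero[OF assms(1)] by simp
next
  case (insert t S)
  have "f (\<lambda>a. \<Sum>s\<in>insert t S. c s * x s a) = f (\<lambda>a. c t * x t a + (\<lambda>a. \<Sum>s\<in>S. c s * x s a) a)"
    using insert by simp
  also have "\<dots> = (\<lambda>b. c t * f (x t) b + f (\<lambda>a. \<Sum>s\<in>S. c s * x s a) b)"
    by (rule linD[OF assms(1)])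
  finally show ?case using insert by simp
qed

lemma lin_expand:
  assumes "lin (f :: ('a::finite \<Rightarrow> 'k::field) \<Rightarrow> _)"
  shows "f x = (\<lambda>b. \<Sum>s\<in>UNIV. x s * f (ev s) b)"
proof -
  have "f x = f (\<lambda>a. \<Sum>s\<in>UNIV. x s * ev s a)" by simp
  also have "\<dots> = (\<lambda>b. \<Sum>s\<in>UNIV. x s * f (ev s) b)" by (rule lin_sum[OF assms]) simp
  finally show ?thesis .
qed

lemma lin_ext:
  assumes "lin (f :: ('a::finite \<Rightarrow> 'k::field) \<Rightarrow> _)" "lin g" "\<And>s. f (ev s) = g (ev s)"
  shows "f = g"
  by (rule ext, subst lin_expand[OF assms(1)], subst lin_expand[OF assms(2)]) (simp add: assms(3))

lemma lin_eq_iff_basis: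
  assumes "lin (L :: ('a::finite \<Rightarrow> 'k::field) \<Rightarrow> _)" "lin R"
  shows "(\<forall>x. L x = R x) \<longleftrightarrow> (\<forall>a c. L (ev a) c = R (ev a) c)"
proof
  assume "\<forall>a c. L (ev a) c = R (ev a) c"
  then have "L = R" by (intro lin_ext[OF assms]) auto
  then show "\<forall>x. L x = R x" by simp
qed simp

lemma lin1_expand:
  assumes "lin1 (e :: ('a::finite \<Rightarrow> 'k::field) \<Rightarrow> 'k)"
  shows "e x = (\<Sum>s\<in>UNIV. x s * e (ev s))"
proof -
  have "lin (\<lambda>x (_::unit). e x)"
    using assms by (simp add: lin_def lin1_def)
  from fun_cong[OF lin_expand[OF this, of x]] show ?thesis by simp
qed

lemma lin_comp: "lin f \<Longrightarrow> lin g \<Longrightarrow> lin (f \<circ> g)"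
  by (simp add: lin_def)

lemma lin_inv:
  assumes "lin f" "bij f"
  shows "lin (inv f)"
  unfolding lin_def
proof (intro allI)
  fix x y c
  have "f (\<lambda>b. c * inv f x b + inv f y b) = (\<lambda>b. c * f (inv f x) b + f (inv f y) b)"
    by (rule linD[OF assms(1)])
  also have "\<dots> = (\<lambda>a. c * x a + y a)"
    using assms(2) by (simp add: bij_is_surj surj_f_inv_f)
  finally show "inv f (\<lambda>a. c * x a + y a) = (\<lambda>b. c * inv f x b + inv f y b)"
    using assms(2) by (metis bij_inv_eq_iff)
qed

lemma lin_id [simp]: "lin id" "lin (\<lambda>x. x)"
  by (simp_all add: lin_def)

lemma lin_tmap [simp]: "lin (tmap f g)"
  by (simp add: lin_def tmap_def fun_eq_iff sum_distrib_left sum.distrib algebra_simps split: prod.splits)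

lemma lin_assocL [simp]: "lin assocL"
  by (simp add: lin_def assocL_def fun_eq_iff split: prod.splits)

lemma lin_assocR [simp]: "lin assocR"
  by (simp add: lin_def assocR_def fun_eq_iff split: prod.splits)

lemma lin_mlin [simp]: "lin (mlin m)"
  by (simp add: lin_def mlin_def fun_eq_iff sum_distrib_left sum.distrib algebra_simps)

lemma lin_contrL [simp]: "lin (contrL e)"
  by (simp add: lin_def contrL_def fun_eq_iff sum_distrib_left sum.distrib algebra_simps)

lemma lin_contrR [simp]: "lin (contrR e)"
  by (simp add: lin_def contrR_def fun_eq_iff sum_distrib_left sum.distrib algebra_simps)

lemma lin_tens_left [simp]: "lin (\<lambda>x. tens x y)"
  by (simp add: lin_def tens_def fun_eq_iff algebra_simps)

lemma lin_tens_right [simp]: "lin (\<lambda>y. tens x y)"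
  by (simp add: lin_def tens_def fun_eq_iff algebra_simps)

subsection \<open>Tensor products\<close>

lemma tens_ev [simp]: "tens (ev a) (ev b) = (ev (a, b) :: _ \<Rightarrow> 'k::field)"
  by (auto simp: tens_def ev_def fun_eq_iff)

lemma tmap_ev: "tmap f g (ev (a, b)) = tens (f (ev a)) (g (ev b))"
  by (simp add: tmap_def tens_def fun_eq_iff mult.assoc del: ev_mult)

lemma tmap_coord: "tmap f g w = (\<lambda>(c, d). \<Sum>a\<in>UNIV. \<Sum>b\<in>UNIV. w (a, b) * f (ev a) c * g (ev b) d)"
  by (simp add: tmap_def fun_eq_iff sum_UNIV_prod)

lemma tmap_id_left: "tmap id g w = (\<lambda>(c, d). \<Sum>b\<in>UNIV. w (c, b) * g (ev b) d)"
  by (simp add: tmap_coord fun_eq_iff) (subst sum.swap, simp)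

lemma tmap_id_right: "tmap f id w = (\<lambda>(c, d). \<Sum>a\<in>UNIV. w (a, d) * f (ev a) c)"
  by (simp add: tmap_coord fun_eq_iff)

lemma tmap_tens:
  assumes "lin f" "lin g"
  shows "tmap f g (tens x y) = tens (f x) (g y)"
proof -
  have "tmap f g (tens x y) = (\<lambda>(c, d). (\<Sum>a\<in>UNIV. x a * f (ev a) c) * (\<Sum>b\<in>UNIV. y b * g (ev b) d))"
    by (simp add: tmap_def tens_def fun_eq_iff sum_UNIV_prod sum_product mult_ac)
  also have "\<dots> = tens (f x) (g y)"
    by (simp add: tens_def fun_eq_iff lin_expand[OF assms(1), of x] lin_expand[OF assms(2), of y])
  finally show ?thesis .
qed

lemma tmap_tmap:
  assumes "lin f" "lin g"
  shows "tmap f g (tmap f' g' w) = tmap (f \<circ> f') (g \<circ> g') w"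
proof -
  have "tmap f g \<circ> tmap f' g' = tmap (f \<circ> f') (g \<circ> g')"
  proof (rule lin_ext)
    fix s
    show "(tmap f g \<circ> tmap f' g') (ev s) = tmap (f \<circ> f') (g \<circ> g') (ev s)"
      by (cases s) (simp add: tmap_ev tmap_tens[OF assms])
  qed (simp_all add: lin_comp)
  then show ?thesis by (metis comp_apply)
qed

lemma tmap_ident [simp]: "tmap (\<lambda>x. x) (\<lambda>x. x) w = (w :: _ \<Rightarrow> 'k::field)"
proof -
  have "tmap (\<lambda>x. x) (\<lambda>x. x) = (id :: (_ \<Rightarrow> 'k) \<Rightarrow> _)"
    by (rule lin_ext) (auto simp: tmap_ev id_def[symmetric])
  then show ?thesis by (metis id_apply)
qed

lemma eq_on_tens_iff_basis:
  assumes "lin (L :: ('a::finite \<times> 'b::finite \<Rightarrow> 'k::field) \<Rightarrow> _)" "lin R"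
  shows "(\<forall>x y. L (tens x y) = R (tens x y)) \<longleftrightarrow> (\<forall>a b c. L (ev (a, b)) c = R (ev (a, b)) c)"
proof
  assume "\<forall>a b c. L (ev (a, b)) c = R (ev (a, b)) c"
  then have "L = R" by (intro lin_ext[OF assms]) auto
  then show "\<forall>x y. L (tens x y) = R (tens x y)" by simp
qed (metis tens_ev)

lemma eq_on_tens3_iff:
  assumes "lin (L :: (('a::finite \<times> 'b::finite) \<times> 'c::finite \<Rightarrow> 'k::field) \<Rightarrow> _)" "lin R"
  shows "(\<forall>x y z. L (tens (tens x y) z) = R (tens (tens x y) z)) \<longleftrightarrow> (\<forall>w. L w = R w)"
proof
  assume "\<forall>x y z. L (tens (tens x y) z) = R (tens (tens x y) z)"
  then have "L (ev ((a, b), c)) = R (ev ((a, b), c))" for a b c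
    by (metis tens_ev)
  then have "L = R"
    by (intro lin_ext[OF assms]) (metis prod.collapse)
  then show "\<forall>w. L w = R w" by simp
qed simp

lemma assocR_ev [simp]: "assocR (ev ((a, b), c)) = (ev (a, (b, c)) :: _ \<Rightarrow> 'k::field)"
  by (auto simp: assocR_def ev_def fun_eq_iff)

lemma assocR_tens [simp]: "assocR (tens (tens x y) z) = tens x (tens y z)"
  by (simp add: assocR_def tens_def fun_eq_iff mult.assoc)

lemma assocR_tmap:
  "assocR (tmap (tmap f g) h w) = tmap f (tmap g h) (assocR (w :: ('a::finite \<times> 'b::finite) \<times> 'c::finite \<Rightarrow> 'k::field))"
proof -
  have "assocR \<circ> tmap (tmap f g) h = tmap f (tmap g h) \<circ> (assocR :: (('a \<times> 'b) \<times> 'c \<Rightarrow> 'k) \<Rightarrow> _)"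
  proof (rule lin_ext)
    fix s :: "('a \<times> 'b) \<times> 'c"
    show "(assocR \<circ> tmap (tmap f g) h) (ev s) = (tmap f (tmap g h) \<circ> assocR) (ev s)"
      by (cases s) (auto simp: tmap_ev)
  qed (simp_all add: lin_comp)
  then show ?thesis by (metis comp_apply)
qed

lemma mlin_ev: "mlin m (ev (a, b)) = m (ev a) (ev b)"
  by (simp add: mlin_def fun_eq_iff)

lemma mlin_tens:
  assumes "bilin m"
  shows "mlin m (tens a b) = m a b"
proof -
  have l1: "lin (m x)" and l2: "lin (\<lambda>x. m x y)" for x y
    using assms by (auto simp: bilin_def)
  have "m a b = (\<lambda>c. \<Sum>y\<in>UNIV. b y * m a (ev y) c)" by (rule lin_expand[OF l1])
  also have "\<dots> = (\<lambda>c. \<Sum>y\<in>UNIV. b y * (\<Sum>x\<in>UNIV. a x * m (ev x) (ev y) c))"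
    by (subst lin_expand[OF l2, of a]) simp
  also have "\<dots> = mlin m (tens a b)"
    by (simp add: mlin_def tens_def fun_eq_iff sum_UNIV_prod sum_distrib_left mult_ac) (subst sum.swap, simp)
  finally show ?thesis by simp
qed

lemma contrR_tens: "lin1 e \<Longrightarrow> contrR e (tens x y) = (\<lambda>a. x a * e y)"
  by (simp add: contrR_def tens_def fun_eq_iff lin1_expand[of e y] sum_distrib_right sum_distrib_left mult_ac)

lemma contrL_tens: "lin1 e \<Longrightarrow> contrL e (tens x y) = (\<lambda>b. e x * y b)"
  by (simp add: contrL_def tens_def fun_eq_iff lin1_expand[of e x] sum_distrib_right sum_distrib_left mult_ac)

lemma pair_ev [simp]: "pair (ev i) v = (v i :: 'k::field)"
  by (simp add: pair_def)

lemma all_eq_iff_conj: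
  assumes "\<And>w. F (L w) = L' (T w)" "\<And>w. F (R w) = R' (T w)" "inj F" "surj T"
  shows "(\<forall>w. L w = R w) \<longleftrightarrow> (\<forall>w. L' w = R' w)"
  using assms by (metis injD surjD)

subsection \<open>The correspondence between \<open>\<phi>\<close> and \<open>\<Phi>\<close>\<close>

locale twist_correspondence =
  fixes m :: "('i::finite \<Rightarrow> 'k::field) \<Rightarrow> ('i \<Rightarrow> 'k) \<Rightarrow> ('i \<Rightarrow> 'k)"
    and one :: "'i \<Rightarrow> 'k"
    and aA :: "('i \<Rightarrow> 'k) \<Rightarrow> ('i \<Rightarrow> 'k)"
    and aH :: "('j::finite \<Rightarrow> 'k) \<Rightarrow> ('j \<Rightarrow> 'k)"
    and dH :: "('j \<Rightarrow> 'k) \<Rightarrow> ('j \<times> 'j \<Rightarrow> 'k)"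
    and eH :: "('j \<Rightarrow> 'k) \<Rightarrow> 'k"
    and phi :: "('i \<times> 'j \<Rightarrow> 'k) \<Rightarrow> ('j \<times> 'i \<Rightarrow> 'k)"
    and Phi :: "('j \<times> 'i \<Rightarrow> 'k) \<Rightarrow> ('i \<times> 'j \<Rightarrow> 'k)"
  assumes A: "hom_algebra m one aA"
    and H: "hom_coalgebra aH dH eH"
    and lin_phi: "lin phi"
    and lin_Phi: "lin Phi"
    and corr: "\<forall>f a h. (\<lambda>j. \<Sum>i\<in>UNIV. f i * Phi (tens h a) (i, j))
                     = (\<lambda>j. \<Sum>i\<in>UNIV. phi (tens f h) (j, i) * a i)"
begin

abbreviation "aA_inv \<equiv> inv aA"
abbreviation "aB \<equiv> dual_alpha aA"
abbreviation "dB \<equiv> dual_delta m aA"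
abbreviation "eB \<equiv> dual_eps one"

lemma bilin_m: "bilin m" and lin_aA: "lin aA" and bij_aA: "bij aA"
  using A by (auto simp: hom_algebra_def)

lemma lin_aH: "lin aH" and bij_aH: "bij aH" and lin_dH: "lin dH" and lin1_eH: "lin1 eH"
  using H by (auto simp: hom_coalgebra_def)

lemma lin_aA_inv: "lin aA_inv"
  by (rule lin_inv[OF lin_aA bij_aA])

lemma lin_aH_inv: "lin (inv aH)"
  by (rule lin_inv[OF lin_aH bij_aH])

lemma lin_aA_twice: "lin (\<lambda>x. aA (aA x))" and lin_aA_inv_twice: "lin (\<lambda>x. aA_inv (aA_inv x))"
  using lin_comp[OF lin_aA lin_aA] lin_comp[OF lin_aA_inv lin_aA_inv] by (simp_all add: comp_def)

lemma aA_aA_inv [simp]: "aA (aA_inv x) = x" and aA_inv_aA [simp]: "aA_inv (aA x) = x"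
  using bij_aA by (simp_all add: bij_is_surj surj_f_inv_f bij_is_inj)

lemma aH_inv_aH [simp]: "aH (inv aH x) = x" and inv_aH_aH [simp]: "inv aH (aH x) = x"
  using bij_aH by (simp_all add: bij_is_surj surj_f_inv_f bij_is_inj)

lemma lin_aB: "lin aB"
  by (simp add: lin_def dual_alpha_def pair_def fun_eq_iff sum_distrib_left sum.distrib algebra_simps)

lemma lin_dB: "lin dB"
  by (simp add: lin_def dual_delta_def pair_def fun_eq_iff sum_distrib_left sum.distrib algebra_simps)

lemma lin1_eB: "lin1 eB"
  by (simp add: lin1_def dual_eps_def pair_def sum_distrib_left sum.distrib algebra_simps)

lemma aB_ev [simp]: "aB (ev p) i = aA_inv (ev i) p"
  by (simp add: dual_alpha_def)

lemma dB_ev [simp]: "dB (ev i) (x, y) = aA_inv (aA_inv (m (ev y) (ev x))) i"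
  by (simp add: dual_delta_def)

lemma eB_ev [simp]: "eB (ev i) = one i"
  by (simp add: dual_eps_def)

definition Phi_coeff :: "'j \<Rightarrow> 'i \<Rightarrow> 'i \<Rightarrow> 'j \<Rightarrow> 'k" where
  "Phi_coeff q i p j = Phi (ev (q, i)) (p, j)"

lemma phi_ev [simp]: "phi (ev (p, q)) (j, i) = Phi_coeff q i p j"
  using fun_cong[OF corr[rule_format, where f = "ev p" and a = "ev i" and h = "ev q"], of j] by (simp add: Phi_coeff_def)

lemma phi_coord: "phi w (j, i) = (\<Sum>p\<in>UNIV. \<Sum>q\<in>UNIV. w (p, q) * Phi_coeff q i p j)"
  by (subst lin_expand[OF lin_phi]) (simp add: sum_UNIV_prod)

lemma Phi_coord: "Phi w (p, j) = (\<Sum>q\<in>UNIV. \<Sum>i\<in>UNIV. w (q, i) * Phi_coeff q i p j)"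
  by (subst lin_expand[OF lin_Phi]) (simp add: sum_UNIV_prod Phi_coeff_def)

lemma phi_tmap_ev:
  "phi (tmap aB aH (ev (p, q))) (j, i) = tmap aA_inv id (Phi (tens (aH (ev q)) (ev i))) (p, j)"
  by (simp add: tmap_ev phi_coord tens_def tmap_id_right Phi_coord sum_distrib_left sum_distrib_right mult_ac)

lemma tmap_phi_ev:
  "tmap aH aB (phi (ev (p, q))) (j, i) = tmap id aH (Phi (tens (ev q) (aA_inv (ev i)))) (p, j)"
  by (simp add: tmap_coord tmap_id_left tens_def Phi_coord ev_collapse sum_distrib_left sum_distrib_right mult_ac)

lemma compat_iff:
  "(\<forall>w. phi (tmap aB aH w) = tmap aH aB (phi w)) \<longleftrightarrow> (\<forall>w. tmap aA aH (Phi w) = Phi (tmap aH aA w))"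
  (is "?L \<longleftrightarrow> ?R")
proof -
  have lin_l: "lin (phi \<circ> tmap aB aH)" and lin_r: "lin (tmap aH aB \<circ> phi)"
    and lin_l': "lin (tmap aA_inv id \<circ> Phi \<circ> tmap aH id)"
    and lin_r': "lin (tmap id aH \<circ> Phi \<circ> tmap id aA_inv)"
    and lin_cl: "lin (tmap aA aH \<circ> Phi)" and lin_cr: "lin (Phi \<circ> tmap aH aA)"
    by (intro lin_comp lin_tmap lin_phi lin_Phi)+
  have "?L \<longleftrightarrow> (\<forall>s c. phi (tmap aB aH (ev s)) c = tmap aH aB (phi (ev s)) c)"
    by (rule lin_eq_iff_basis[OF lin_l[unfolded comp_def] lin_r[unfolded comp_def]])
  also have "\<dots> \<longleftrightarrow> (\<forall>q i p j. tmap aA_inv id (Phi (tens (aH (ev q)) (ev i))) (p, j)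
      = tmap id aH (Phi (tens (ev q) (aA_inv (ev i)))) (p, j))"
    by (auto simp: phi_tmap_ev tmap_phi_ev)
  also have "\<dots> \<longleftrightarrow> (\<forall>x y. tmap aA_inv id (Phi (tmap aH id (tens x y))) = tmap id aH (Phi (tmap id aA_inv (tens x y))))"
    by (subst eq_on_tens_iff_basis[OF lin_l'[unfolded comp_def] lin_r'[unfolded comp_def]]) (auto simp: tmap_ev)
  also have "\<dots> \<longleftrightarrow> (\<forall>x y. tmap aA_inv id (Phi (tens (aH x) y)) = tmap id aH (Phi (tens x (aA_inv y))))"
    by (simp add: tmap_tens lin_aH lin_aA_inv)
  also have "\<dots> \<longleftrightarrow> (\<forall>x y. tmap aA aH (Phi (tens x y)) = Phi (tens (aH x) (aA y)))"
  proof safe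
    fix x y
    assume h: "\<forall>x y. tmap aA_inv id (Phi (tens (aH x) y)) = tmap id aH (Phi (tens x (aA_inv y)))"
    have "Phi (tens (aH x) (aA y)) = tmap aA id (tmap aA_inv id (Phi (tens (aH x) (aA y))))"
      by (simp add: tmap_tmap lin_aA comp_def id_def)
    also have "\<dots> = tmap aA id (tmap id aH (Phi (tens x y)))"
      using h by simp
    also have "\<dots> = tmap aA aH (Phi (tens x y))"
      by (simp add: tmap_tmap lin_aA comp_def id_def)
    finally show "tmap aA aH (Phi (tens x y)) = Phi (tens (aH x) (aA y))" by simp
  next
    fix x y
    assume h: "\<forall>x y. tmap aA aH (Phi (tens x y)) = Phi (tens (aH x) (aA y))"
    have "tmap aA_inv id (Phi (tens (aH x) y)) = tmap aA_inv id (Phi (tens (aH x) (aA (aA_inv y))))"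
      by simp
    also have "\<dots> = tmap aA_inv id (tmap aA aH (Phi (tens x (aA_inv y))))"
      using h by simp
    also have "\<dots> = tmap id aH (Phi (tens x (aA_inv y)))"
      by (simp add: tmap_tmap lin_aA_inv comp_def id_def)
    finally show "tmap aA_inv id (Phi (tens (aH x) y)) = tmap id aH (Phi (tens x (aA_inv y)))" .
  qed
  also have "\<dots> \<longleftrightarrow> (\<forall>x y. tmap aA aH (Phi (tens x y)) = Phi (tmap aH aA (tens x y)))"
    by (simp add: tmap_tens lin_aH lin_aA)
  also have "\<dots> \<longleftrightarrow> ?R"
    by (subst eq_on_tens_iff_basis[OF lin_cl[unfolded comp_def] lin_cr[unfolded comp_def]])
      (simp add: lin_eq_iff_basis[OF lin_cl[unfolded comp_def] lin_cr[unfolded comp_def]])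
  finally show ?thesis .
qed

lemma M3_iff_E3:
  "(\<forall>b h. contrL eH (phi (tens b h)) = (\<lambda>i. eH h * b i)) \<longleftrightarrow>
   (\<forall>a h. contrR eH (Phi (tens h a)) = (\<lambda>i. eH h * a i))"
proof -
  have lin_l: "lin (contrL eH \<circ> phi)" and lin_r: "lin (contrR eH \<circ> Phi)"
    by (intro lin_comp lin_contrL lin_contrR lin_phi lin_Phi)+
  have "(\<forall>b h. contrL eH (phi (tens b h)) = (\<lambda>i. eH h * b i)) \<longleftrightarrow>
      (\<forall>b h. contrL eH (phi (tens b h)) = contrR eH (tens b h))"
    by (simp add: contrR_tens[OF lin1_eH] mult.commute)
  also have "\<dots> \<longleftrightarrow> (\<forall>p q i. (\<Sum>j\<in>UNIV. Phi_coeff q i p j * eH (ev j)) = (if i = p then eH (ev q) else 0))"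
    by (subst eq_on_tens_iff_basis[OF lin_l[unfolded comp_def] lin_contrR])
      (simp add: contrL_def contrR_def ev_collapse)
  also have "\<dots> \<longleftrightarrow> (\<forall>h a. contrR eH (Phi (tens h a)) = contrL eH (tens h a))"
    by (subst eq_on_tens_iff_basis[OF lin_r[unfolded comp_def] lin_contrL])
      (auto simp: contrL_def contrR_def ev_collapse Phi_coord)
  also have "\<dots> \<longleftrightarrow> (\<forall>a h. contrR eH (Phi (tens h a)) = (\<lambda>i. eH h * a i))"
    by (auto simp: contrL_tens[OF lin1_eH])
  finally show ?thesis .
qed

lemma M4_iff_E4:
  "(\<forall>b h. contrR eB (phi (tens b h)) = (\<lambda>j. eB b * h j)) \<longleftrightarrow> (\<forall>h. Phi (tens h one) = tens one h)"
proof -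
  have lin_l: "lin (contrR eB \<circ> phi)" and lin_r: "lin (Phi \<circ> (\<lambda>h. tens h one))"
    by (intro lin_comp lin_contrR lin_phi lin_Phi lin_tens_left)+
  have "(\<forall>b h. contrR eB (phi (tens b h)) = (\<lambda>j. eB b * h j)) \<longleftrightarrow>
      (\<forall>b h. contrR eB (phi (tens b h)) = contrL eB (tens b h))"
    by (simp add: contrL_tens[OF lin1_eB])
  also have "\<dots> \<longleftrightarrow> (\<forall>p q j. (\<Sum>i\<in>UNIV. Phi_coeff q i p j * one i) = (if j = q then one p else 0))"
    by (subst eq_on_tens_iff_basis[OF lin_l[unfolded comp_def] lin_contrL])
      (simp add: contrL_def contrR_def ev_collapse)
  also have "\<dots> \<longleftrightarrow> (\<forall>h. Phi (tens h one) = tens one h)"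
    by (subst lin_eq_iff_basis[OF lin_r[unfolded comp_def] lin_tens_right])
      (auto simp: tens_def ev_collapse Phi_coord mult.commute)
  finally show ?thesis .
qed

lemma M2_lhs_ev:
  "assocL (tmap id phi (assocR (tmap phi id (assocL (tmap aB dH (ev (p, q))))))) ((j1, j2), i)
   = tmap aA_inv id (assocR (tmap Phi id (assocL (tmap id Phi (assocR (tmap dH id (ev (q, i))))))))
       (p, (j1, j2))"
  by (simp add: tmap_ev assocL_def assocR_def tmap_id_left tmap_id_right sum_UNIV_prod tens_def
      Phi_coord ev_collapse sum_distrib_left sum_distrib_right mult_ac)
    (subst sum_swap_pairs, simp add: mult_ac)

lemma M2_rhs_ev:
  "tmap dH aB (phi (ev (p, q))) ((j1, j2), i) = tmap id dH (Phi (tmap id aA_inv (ev (q, i)))) (p, (j1, j2))"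
  by (simp add: tmap_coord tmap_id_left sum_UNIV_prod tmap_ev tens_def Phi_coord ev_collapse
      sum_distrib_left sum_distrib_right mult_ac)

lemma M2_iff_E2:
  "(\<forall>b h. assocL (tmap id phi (assocR (tmap phi id (assocL (tens (aB b) (dH h))))))
      = tmap dH aB (phi (tens b h)))
   \<longleftrightarrow> (\<forall>a h. assocR (tmap Phi id (assocL (tmap id Phi (assocR (tens (dH h) (aA a))))))
      = tmap aA dH (Phi (tens h a)))"
  (is "?L \<longleftrightarrow> ?R")
proof -
  have lin_l: "lin (assocL \<circ> tmap id phi \<circ> assocR \<circ> tmap phi id \<circ> assocL \<circ> tmap aB dH)"
    and lin_r: "lin (tmap dH aB \<circ> phi)"
    and lin_l': "lin (tmap aA_inv id \<circ> assocR \<circ> tmap Phi id \<circ> assocL \<circ> tmap id Phi \<circ> assocR \<circ> tmap dH id)"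
    and lin_r': "lin (tmap id dH \<circ> Phi \<circ> tmap id aA_inv)"
    by (intro lin_comp lin_tmap lin_assocL lin_assocR lin_phi lin_Phi)+
  have "?L \<longleftrightarrow> (\<forall>x y. assocL (tmap id phi (assocR (tmap phi id (assocL (tmap aB dH (tens x y))))))
      = tmap dH aB (phi (tens x y)))"
    by (simp add: tmap_tens lin_aB lin_dH)
  also have "\<dots> \<longleftrightarrow> (\<forall>x y. tmap aA_inv id (assocR (tmap Phi id (assocL (tmap id Phi (assocR (tmap dH id (tens x y)))))))
      = tmap id dH (Phi (tmap id aA_inv (tens x y))))"
    by (simp only: eq_on_tens_iff_basis[OF lin_l[unfolded comp_def] lin_r[unfolded comp_def]]
        eq_on_tens_iff_basis[OF lin_l'[unfolded comp_def] lin_r'[unfolded comp_def]])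
      (auto simp: M2_lhs_ev M2_rhs_ev)
  also have "\<dots> \<longleftrightarrow> (\<forall>h a. tmap aA_inv id (assocR (tmap Phi id (assocL (tmap id Phi (assocR (tens (dH h) a))))))
      = tmap id dH (Phi (tens h (aA_inv a))))"
    by (simp add: tmap_tens lin_dH lin_aA_inv)
  also have "\<dots> \<longleftrightarrow> ?R"
  proof safe
    fix a h
    assume h: "\<forall>h a. tmap aA_inv id (assocR (tmap Phi id (assocL (tmap id Phi (assocR (tens (dH h) a))))))
      = tmap id dH (Phi (tens h (aA_inv a)))"
    let ?X = "assocR (tmap Phi id (assocL (tmap id Phi (assocR (tens (dH h) (aA a))))))"
    have "?X = tmap aA id (tmap aA_inv id ?X)"
      by (simp add: tmap_tmap lin_aA comp_def id_def)
    also have "\<dots> = tmap aA id (tmap id dH (Phi (tens h a)))"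
      using h by simp
    also have "\<dots> = tmap aA dH (Phi (tens h a))"
      by (simp add: tmap_tmap lin_aA comp_def id_def)
    finally show "?X = tmap aA dH (Phi (tens h a))" .
  next
    fix h a
    assume ?R
    let ?Y = "assocR (tmap Phi id (assocL (tmap id Phi (assocR (tens (dH h) a)))))"
    have "tmap aA_inv id ?Y = tmap aA_inv id (tmap aA dH (Phi (tens h (aA_inv a))))"
      using \<open>?R\<close>[rule_format, where a = "aA_inv a" and h = h] by simp
    also have "\<dots> = tmap id dH (Phi (tens h (aA_inv a)))"
      by (simp add: tmap_tmap lin_aA_inv comp_def id_def)
    finally show "tmap aA_inv id ?Y = tmap id dH (Phi (tens h (aA_inv a)))" .
  qed
  finally show ?thesis .
qed

lemma M1_lhs_ev:
  "assocR (tmap phi id (assocL (tmap id phi (assocR (tmap dB aH (ev (p, q))))))) (j, (x, y))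
   = tmap (\<lambda>v. aA_inv (aA_inv (mlin m v))) id
       (assocL (tmap id Phi (assocR (tmap Phi id (tmap (tmap aH id) id (ev ((q, y), x))))))) (p, j)"
  by (simp add: tmap_ev assocL_def assocR_def tmap_id_left tmap_id_right sum_UNIV_prod tens_def mlin_ev)
    (simp add: Phi_coord ev_collapse sum_distrib_left sum_distrib_right mult_ac,
      rule trans[OF sum_rotate3], simp add: mult_ac)

lemma M1_rhs_ev:
  "tmap aH dB (phi (ev (p, q))) (j, (x, y))
   = tmap id aH (Phi (tmap id (\<lambda>v. aA_inv (aA_inv (mlin m v))) (assocR (ev ((q, y), x))))) (p, j)"
  by (simp add: tmap_coord tmap_id_left sum_UNIV_prod tmap_ev assocR_def tens_def Phi_coord ev_collapse
      mlin_ev sum_distrib_left sum_distrib_right mult_ac)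

lemma M1_iff_E1:
  assumes compat: "\<forall>w. tmap aA aH (Phi w) = Phi (tmap aH aA w)"
  shows "(\<forall>b h. assocR (tmap phi id (assocL (tmap id phi (assocR (tens (dB b) (aH h))))))
      = tmap aH dB (phi (tens b h)))
   \<longleftrightarrow> (\<forall>a b h. tmap (mlin m) aH (assocL (tmap id Phi (assocR (tmap Phi id (tens (tens h a) b)))))
      = Phi (tens (aH h) (m a b)))"
  (is "?L \<longleftrightarrow> ?R")
proof -
  define G where "G = (\<lambda>v. aA_inv (aA_inv (mlin m v)))"
  define T :: "(('j \<times> 'i) \<times> 'i \<Rightarrow> 'k) \<Rightarrow> _" where "T = tmap (tmap aH id) id"
  define QL where "QL w = tmap G id (assocL (tmap id Phi (assocR (tmap Phi id (T w)))))" for w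
  define QR where "QR w = tmap id aH (Phi (tmap id G (assocR w)))" for w
  define EL where "EL w = tmap (mlin m) aH (assocL (tmap id Phi (assocR (tmap Phi id w))))" for w
  define ER where "ER w = Phi (tmap aH (mlin m) (assocR w))" for w
  have lin_l: "lin (assocR \<circ> tmap phi id \<circ> assocL \<circ> tmap id phi \<circ> assocR \<circ> tmap dB aH)"
    and lin_r: "lin (tmap aH dB \<circ> phi)"
    and lin_QL: "lin (tmap G id \<circ> assocL \<circ> tmap id Phi \<circ> assocR \<circ> tmap Phi id \<circ> T)"
    and lin_QR: "lin (tmap id aH \<circ> Phi \<circ> tmap id G \<circ> assocR)"
    and lin_EL: "lin (tmap (mlin m) aH \<circ> assocL \<circ> tmap id Phi \<circ> assocR \<circ> tmap Phi id)"
    and lin_ER: "lin (Phi \<circ> tmap aH (mlin m) \<circ> assocR)"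
    unfolding T_def by (intro lin_comp lin_tmap lin_assocL lin_assocR lin_phi lin_Phi)+
  have "?L \<longleftrightarrow> (\<forall>x y. assocR (tmap phi id (assocL (tmap id phi (assocR (tmap dB aH (tens x y))))))
      = tmap aH dB (phi (tens x y)))"
    by (simp add: tmap_tens lin_dB lin_aH)
  also have "\<dots> \<longleftrightarrow> (\<forall>w. QL w = QR w)"
    by (simp only: eq_on_tens_iff_basis[OF lin_l[unfolded comp_def] lin_r[unfolded comp_def]]
        lin_eq_iff_basis[OF lin_QL[unfolded comp_def QL_def[symmetric]] lin_QR[unfolded comp_def QR_def[symmetric]]])
      (auto simp: M1_lhs_ev M1_rhs_ev QL_def QR_def G_def T_def)
  also have "\<dots> \<longleftrightarrow> (\<forall>w. EL w = ER w)"
  proof (rule all_eq_iff_conj)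
    let ?F = "tmap (\<lambda>x. aA (aA x)) aH"
    show "?F (QL w) = EL (T w)" for w
      unfolding QL_def EL_def G_def by (simp add: tmap_tmap lin_aA_twice lin_aH comp_def)
    show "?F (QR w) = ER (T w)" for w
    proof -
      let ?Z = "tmap id G (assocR w)"
      have "?F (QR w) = tmap aA aH (tmap aA aH (Phi ?Z))"
        unfolding QR_def by (simp add: tmap_tmap lin_aA_twice lin_aA lin_aH comp_def id_def)
      also have "\<dots> = Phi (tmap aH aA (tmap aH aA ?Z))"
        using compat by simp
      also have "\<dots> = ER (T w)"
        unfolding ER_def T_def G_def by (simp add: assocR_tmap tmap_tmap lin_aA lin_aH comp_def id_def)
      finally show ?thesis .
    qed
    have "tmap (\<lambda>x. aA_inv (aA_inv x)) (inv aH) (?F X) = X" for X :: "'i \<times> 'j \<Rightarrow> 'k"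
      by (simp add: tmap_tmap lin_aA_inv_twice lin_aH_inv comp_def)
    then show "inj ?F"
      by (metis injI)
    have "T (tmap (tmap (inv aH) id) id w) = w" for w
      unfolding T_def by (simp add: tmap_tmap lin_aH comp_def id_def)
    then show "surj T"
      by (metis surjI)
  qed
  also have "\<dots> \<longleftrightarrow> ?R"
  proof -
    have "ER (tens (tens h a) b) = Phi (tens (aH h) (m a b))" for h a b
      unfolding ER_def by (simp add: tmap_tens lin_aH mlin_tens[OF bilin_m])
    then show ?thesis
      using eq_on_tens3_iff[OF lin_EL[unfolded comp_def EL_def[symmetric]] lin_ER[unfolded comp_def ER_def[symmetric]]]
      unfolding EL_def by metis
  qed
  finally show ?thesis .
qed

end

theorem theorem5p1:
  fixes m :: "('i::finite \<Rightarrow> 'k::field_char_0) \<Rightarrow> ('i \<Rightarrow> 'k) \<Rightarrow> ('i \<Rightarrow> 'k)"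
    and one :: "'i \<Rightarrow> 'k"
    and aA :: "('i \<Rightarrow> 'k) \<Rightarrow> ('i \<Rightarrow> 'k)"
    and aH :: "('j::finite \<Rightarrow> 'k) \<Rightarrow> ('j \<Rightarrow> 'k)"
    and dH :: "('j \<Rightarrow> 'k) \<Rightarrow> ('j \<times> 'j \<Rightarrow> 'k)"
    and eH :: "('j \<Rightarrow> 'k) \<Rightarrow> 'k"
    and phi :: "('i \<times> 'j \<Rightarrow> 'k) \<Rightarrow> ('j \<times> 'i \<Rightarrow> 'k)"
    and Phi :: "('j \<times> 'i \<Rightarrow> 'k) \<Rightarrow> ('i \<times> 'j \<Rightarrow> 'k)"
  assumes A: "hom_algebra m one aA"
    and H: "hom_coalgebra aH dH eH"
    and lin_phi: "lin phi"
    and lin_Phi: "lin Phi"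
    and corr: "\<forall>f a h. (\<lambda>j. \<Sum>i\<in>UNIV. f i * Phi (tens h a) (i, j))
                     = (\<lambda>j. \<Sum>i\<in>UNIV. phi (tens f h) (j, i) * a i)"
  shows "hom_cotwistor (dual_alpha aA) (dual_delta m aA) (dual_eps one) aH dH eH phi \<longleftrightarrow>
    ((\<forall>w. tmap aA aH (Phi w) = Phi (tmap aH aA w)) \<and>
     (\<forall>a b h. tmap (mlin m) aH (assocL (tmap id Phi (assocR (tmap Phi id (tens (tens h a) b)))))
               = Phi (tens (aH h) (m a b))) \<and>
     (\<forall>a h. assocR (tmap Phi id (assocL (tmap id Phi (assocR (tens (dH h) (aA a))))))
               = tmap aA dH (Phi (tens h a))) \<and>
     (\<forall>a h. contrR eH (Phi (tens h a)) = (\<lambda>i. eH h * a i)) \<and>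
     (\<forall>h. Phi (tens h one) = tens one h))"
proof -
  interpret twist_correspondence m one aA aH dH eH phi Phi
    using A H lin_phi lin_Phi corr by (rule twist_correspondence.intro)
  show ?thesis
    unfolding hom_cotwistor_def
    using compat_iff M1_iff_E1 M2_iff_E2 M3_iff_E3 M4_iff_E4 lin_phi by blast
qed

end
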